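(* There is an absolute constant $c>0$ such that for all sufficiently large $k$, with $r=2^k\ln 2-\frac{1+\ln 2}{2}-\epsilon_k$, $\epsilon_k=\Theta_k(2^{-k/3})$ and $M=\lceil rN\rceil$, with probability $1-o(1)$ as $N\to\infty$ the following holds: for every set $A\subseteq L$ of literals with $|A|\ge 0.018N$, the set $\mathcal M$ of indices $i\in[M]$ such that at least $0.002k$ of the literals $\Phi_{i1},\dots,\Phi_{ik}$ lie in $A$ satisfies $|\mathcal M|\ge (1-\exp(-ck))M$.
   Context: $\Phi=\Phi_k(N,M)$ is the random $k$-CNF on $V=\{x_1,\dots,x_N\}$ with literal set $L=\{x_1,\neg x_1,\dots,x_N,\neg x_N\}$ and clauses $\Phi_i=\Phi_{i1}\vee\dots\vee\Phi_{ik}$ ($i\in[M]$), each $\Phi_{ij}$ independent and uniform in $L$. Literals in a clause are counted by position. *)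

theory Defs
  imports "HOL-Probability.Probability" "HOL-Library.Landau_Symbols"
begin

text \<open>Literals: (v, True) is x_v, (v, False) is its negation; variables are indexed by {..<N}.\<close>
type_synonym lit = "nat \<times> bool"

definition literals :: "nat \<Rightarrow> lit set" where
  "literals N = {..<N} \<times> UNIV"

text \<open>A k-CNF with M clauses: Phi i j is the j-th literal of clause i (i < M, j < k).\<close>
definition kcnfs :: "nat \<Rightarrow> nat \<Rightarrow> nat \<Rightarrow> (nat \<Rightarrow> nat \<Rightarrow> lit) set" where
  "kcnfs k N M = {..<M} \<rightarrow>\<^sub>E ({..<k} \<rightarrow>\<^sub>E literals N)"

text \<open>The random formula Phi_k(N,M): all literals independent and uniform in L.\<close>
definition random_kcnf :: "nat \<Rightarrow> nat \<Rightarrow> nat \<Rightarrow> (nat \<Rightarrow> nat \<Rightarrow> lit) pmf" where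
  "random_kcnf k N M = pmf_of_set (kcnfs k N M)"

text \<open>Number of positions j < k of clause i whose literal lies in A (counted by position).\<close>
definition hits :: "nat \<Rightarrow> (nat \<Rightarrow> nat \<Rightarrow> lit) \<Rightarrow> lit set \<Rightarrow> nat \<Rightarrow> nat" where
  "hits k Phi A i = card {j \<in> {..<k}. Phi i j \<in> A}"

definition density :: "(nat \<Rightarrow> real) \<Rightarrow> nat \<Rightarrow> real" where
  "density eps k = 2 ^ k * ln 2 - (1 + ln 2) / 2 - eps k"

definition num_clauses :: "(nat \<Rightarrow> real) \<Rightarrow> nat \<Rightarrow> nat \<Rightarrow> nat" where
  "num_clauses eps k N = nat \<lceil>density eps k * real N\<rceil>"

end

theory Submission
  imports Defs "HOL-Real_Asymp.Real_Asymp" "HOL-Analysis.Harmonic_Numbers"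
begin

(*
  A random k-CNF with M clauses over the literal set L is a uniformly
  random word of length M over the alphabet C = L^k of clauses, and a clause is a
  uniformly random word of length k over L.  Everything reduces to exponential-moment
  (Chernoff-type) counting for the number of positions at which a uniform word over a
  finite alphabet hits a fixed subset B of the alphabet:
    (1) the moment generating function of this count factorises over positions;
    (2) lower tail: if |A| >= 0.009 |L|, at most a fraction exp(-k/400) of the clauses
        contain fewer than 0.002k literals of A;
    (3) upper tail: hence, for a fixed A, the fraction of formulas in which more than
        exp(-k/1000) M clauses are such "A-avoiding" clauses is at most exp(-|L|),
        as soon as M k exp(-k/1000) >= 1600 |L|;
    (4) a union bound over the at most 2^|L| sets A gives failure probability at most
        (2/e)^|L| = (4/e^2)^N.
  The density 2^k ln 2 - (1 + ln 2)/2 - eps_k is at least 2^k/2 for large k, which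
  makes the hypothesis of (3) hold for every N; letting N -> infinity proves the
  theorem with c = 1/1000.
*)

section \<open>Counting hits of a fixed set in a random word\<close>

definition occurrences :: "nat \<Rightarrow> (nat \<Rightarrow> 'a) \<Rightarrow> 'a set \<Rightarrow> nat" where
  "occurrences n w B = card {j \<in> {..<n}. w j \<in> B}"

lemma sum_exp_occurrences:
  fixes L B :: "'a set" and s :: real
  assumes fin: "finite L" and BL: "B \<subseteq> L"
  shows "(\<Sum>w\<in>{..<n} \<rightarrow>\<^sub>E L. exp (s * occurrences n w B))
           = (exp s * card B + (real (card L) - card B)) ^ n"
proof -
  have prod_form: "exp (s * occurrences n w B) = (\<Prod>j\<in>{..<n}. if w j \<in> B then exp s else 1)"
    for w :: "nat \<Rightarrow> 'a"
    by (simp add: occurrences_def prod.If_cases Int_def exp_of_nat_mult[symmetric] mult.commute)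
  have "(\<Sum>w\<in>{..<n} \<rightarrow>\<^sub>E L. \<Prod>j\<in>{..<n}. if w j \<in> B then exp s else 1)
          = (\<Prod>j\<in>{..<n}. \<Sum>l\<in>L. if l \<in> B then exp s else (1::real))"
    by (rule prod_sum_PiE[symmetric]) (use fin in auto)
  also have "\<dots> = (exp s * card B + card (L - B)) ^ n"
    using fin BL by (simp add: sum.If_cases Int_absorb1 Diff_eq mult.commute)
  also have "\<dots> = (exp s * card B + (real (card L) - card B)) ^ n"
    using fin BL by (simp add: card_Diff_subset finite_subset of_nat_diff card_mono)
  finally show ?thesis by (simp add: prod_form)
qed

lemma card_words_exp_tail:
  fixes L B :: "'a set" and s v :: real
  assumes fin: "finite L" and BL: "B \<subseteq> L"
    and tail: "\<And>w. w \<in> {..<n} \<rightarrow>\<^sub>E L \<Longrightarrow> P w \<Longrightarrow> v \<le> s * occurrences n w B"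
  shows "exp v * card {w \<in> {..<n} \<rightarrow>\<^sub>E L. P w} \<le> (exp s * card B + (real (card L) - card B)) ^ n"
proof -
  have finW: "finite ({..<n} \<rightarrow>\<^sub>E L)" using fin by (simp add: finite_PiE)
  have "exp v * card {w \<in> {..<n} \<rightarrow>\<^sub>E L. P w} = (\<Sum>w\<in>{w \<in> {..<n} \<rightarrow>\<^sub>E L. P w}. exp v)"
    by simp
  also have "\<dots> \<le> (\<Sum>w\<in>{w \<in> {..<n} \<rightarrow>\<^sub>E L. P w}. exp (s * occurrences n w B))"
    using tail by (intro sum_mono) auto
  also have "\<dots> \<le> (\<Sum>w\<in>{..<n} \<rightarrow>\<^sub>E L. exp (s * occurrences n w B))"
    using finW by (intro sum_mono2) auto
  finally show ?thesis by (simp only: sum_exp_occurrences[OF fin BL])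
qed

lemma few_words_avoid_dense_set:
  fixes L A :: "'a set" and k :: nat
  assumes fin: "finite L" and AL: "A \<subseteq> L" and dense: "0.009 * real (card L) \<le> card A"
  shows "card {w \<in> {..<k} \<rightarrow>\<^sub>E L. occurrences k w A < 0.002 * real k}
           \<le> exp (- real k / 400) * real (card L) ^ k"
proof -
  define n a where "n = real (card L)" and "a = real (card A)"
  have a_le_n: "a \<le> n" using card_mono[OF fin AL] by (simp add: a_def n_def)
  have exp2: "81/16 \<le> exp (2::real)"
    using exp_ge_one_plus_x_over_n_power_n[of 4 2] by (simp add: eval_nat_numeral)
  have base: "exp (-2) * a + (n - a) \<le> n * exp (- 0.0072)"
  proof -
    have "exp (-2::real) \<le> 1/5" using exp2 by (simp add: exp_minus field_simps)
    then have "exp (-2) * a + (n - a) \<le> n - 0.8 * a"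
      using mult_right_mono[of "exp (-2)" "1/5" a] by (simp add: a_def)
    also have "\<dots> \<le> n * (1 - 0.0072)" using dense by (simp add: a_def n_def)
    also have "\<dots> \<le> n * exp (- 0.0072)"
      using exp_ge_add_one_self[of "-0.0072"] by (intro mult_left_mono) (auto simp: n_def)
    finally show ?thesis .
  qed
  have "exp (- real k / 250) * card {w \<in> {..<k} \<rightarrow>\<^sub>E L. occurrences k w A < 0.002 * real k}
          \<le> (exp (-2) * a + (n - a)) ^ k"
    unfolding a_def n_def by (rule card_words_exp_tail[OF fin AL]) simp
  also have "\<dots> \<le> (n * exp (- 0.0072)) ^ k"
    using base a_le_n by (intro power_mono) (auto simp: a_def)
  also have "\<dots> = exp (- 0.0072 * real k) * n ^ k"
    by (simp add: power_mult_distrib exp_of_nat_mult[symmetric] mult.commute)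
  finally have "card {w \<in> {..<k} \<rightarrow>\<^sub>E L. occurrences k w A < 0.002 * real k}
                  \<le> exp (real k / 250) * exp (- 0.0072 * real k) * n ^ k"
    by (simp add: exp_minus field_simps)
  also have "\<dots> \<le> exp (- real k / 400) * n ^ k"
    by (intro mult_right_mono) (auto simp: n_def simp flip: exp_add)
  finally show ?thesis by (simp add: n_def)
qed

lemma few_words_hit_sparse_set_often:
  fixes L B :: "'a set" and M :: nat and q \<mu> T :: real
  assumes fin: "finite L" and BL: "B \<subseteq> L" and sparse: "card B \<le> q * card L" and mu: "0 \<le> \<mu>"
  shows "exp (\<mu> * T) * card {w \<in> {..<M} \<rightarrow>\<^sub>E L. T < occurrences M w B}
           \<le> real (card L) ^ M * exp (exp \<mu> * q * M)"
proof -
  define n b where "n = real (card L)" and "b = real (card B)"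
  have b_le_n: "b \<le> n" using card_mono[OF fin BL] by (simp add: b_def n_def)
  have base: "exp \<mu> * b + (n - b) \<le> n * exp (exp \<mu> * q)"
  proof -
    have qn: "0 \<le> q * n" using sparse of_nat_0_le_iff[of "card B"] unfolding b_def n_def by linarith
    have "exp \<mu> * b + (n - b) = n + (exp \<mu> - 1) * b" by (simp add: algebra_simps)
    also have "\<dots> \<le> n + (exp \<mu> - 1) * (q * n)"
      using mu sparse by (intro add_left_mono mult_left_mono) (auto simp: b_def n_def)
    also have "\<dots> \<le> n * (1 + exp \<mu> * q)" using qn by (simp add: algebra_simps)
    also have "\<dots> \<le> n * exp (exp \<mu> * q)"
      by (intro mult_left_mono) (auto simp: n_def)
    finally show ?thesis .
  qed
  have "exp (\<mu> * T) * card {w \<in> {..<M} \<rightarrow>\<^sub>E L. T < occurrences M w B}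
          \<le> (exp \<mu> * b + (n - b)) ^ M"
    unfolding b_def n_def by (rule card_words_exp_tail[OF fin BL]) (use mu in \<open>simp add: mult_left_mono\<close>)
  also have "\<dots> \<le> (n * exp (exp \<mu> * q)) ^ M"
    using base b_le_n by (intro power_mono) (auto simp: b_def)
  also have "\<dots> = n ^ M * exp (exp \<mu> * q * M)"
    by (simp add: power_mult_distrib exp_of_nat_mult[symmetric] mult.commute)
  finally show ?thesis by (simp add: n_def)
qed

section \<open>Random formulas\<close>

text \<open>For one dense set A of literals, few formulas contain more than a fraction
  exp(-k/1000) of clauses hitting A fewer than 0.002k times: the "A-avoiding" clauses
  form a set of density at most exp(-k/400), to which the upper tail applies with
  exponent k/800.\<close>
lemma few_formulas_with_many_avoiding_clauses:
  fixes L A :: "'a set" and k M :: nat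
  assumes fin: "finite L" and AL: "A \<subseteq> L" and dense: "0.009 * real (card L) \<le> card A"
    and k: "1600 \<le> k" and long: "1600 * real (card L) \<le> real M * real k * exp (- real k / 1000)"
  shows "card {\<Phi> \<in> {..<M} \<rightarrow>\<^sub>E ({..<k} \<rightarrow>\<^sub>E L).
             exp (- real k / 1000) * M < card {i \<in> {..<M}. occurrences k (\<Phi> i) A < 0.002 * real k}}
           \<le> exp (- real (card L)) * real (card L) ^ (k * M)"
proof -
  define C where "C = {..<k} \<rightarrow>\<^sub>E L"
  define Bad where "Bad = {w \<in> C. occurrences k w A < 0.002 * real k}"
  define e where "e = exp (- real k / 1000)"
  define \<mu> where "\<mu> = real k / 800"
  have finC: "finite C" using fin by (simp add: C_def finite_PiE)
  have cardC: "card C = card L ^ k" by (simp add: C_def card_PiE)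
  have sparse: "card Bad \<le> exp (- real k / 400) * card C"
    using few_words_avoid_dense_set[OF fin AL dense, of k] by (simp add: Bad_def C_def card_PiE)
  have same_count: "card {i \<in> {..<M}. occurrences k (\<Phi> i) A < 0.002 * real k} = occurrences M \<Phi> Bad"
    if "\<Phi> \<in> {..<M} \<rightarrow>\<^sub>E C" for \<Phi>
    using that unfolding occurrences_def Bad_def by (intro arg_cong[where f=card]) auto
  define F where "F = {\<Phi> \<in> {..<M} \<rightarrow>\<^sub>E C. e * M < occurrences M \<Phi> Bad}"
  have "exp (\<mu> * (e * M)) * card F \<le> real (card C) ^ M * exp (exp \<mu> * exp (- real k / 400) * M)"
    unfolding F_def by (rule few_words_hit_sparse_set_often[OF finC _ sparse]) (auto simp: Bad_def \<mu>_def)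
  also have "exp \<mu> * exp (- real k / 400) = exp (- real k / 800)"
    by (simp add: \<mu>_def flip: exp_add)
  finally have "card F \<le> real (card C) ^ M * exp (exp (- real k / 800) * M) / exp (\<mu> * (e * M))"
    by (simp add: pos_le_divide_eq mult.commute)
  then have "card F \<le> real (card C) ^ M * exp (exp (- real k / 800) * M - \<mu> * (e * M))"
    by (simp add: exp_diff)
  also have "\<dots> \<le> real (card C) ^ M * exp (- real (card L))"
  proof -
    have "exp (- real k / 800) \<le> e" by (simp add: e_def)
    also have "e \<le> e * (real k / 1600)" using k by (simp add: e_def)
    finally have "exp (- real k / 800) * M - \<mu> * (e * M) \<le> e * (real k / 1600) * M - \<mu> * (e * M)"
      by (intro diff_right_mono mult_right_mono) auto
    also have "\<dots> = - (real M * real k * e / 1600)" by (simp add: \<mu>_def algebra_simps)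
    also have "\<dots> \<le> - real (card L)" using long by (simp add: e_def)
    finally show ?thesis by (intro mult_left_mono) auto
  qed
  also have "\<dots> = exp (- real (card L)) * real (card L) ^ (k * M)"
    by (simp add: cardC power_mult)
  finally have "card F \<le> exp (- real (card L)) * real (card L) ^ (k * M)" .
  moreover have "F = {\<Phi> \<in> {..<M} \<rightarrow>\<^sub>E C.
             e * M < card {i \<in> {..<M}. occurrences k (\<Phi> i) A < 0.002 * real k}}"
    unfolding F_def by (intro Collect_cong conj_cong refl) (simp only: same_count)
  ultimately show ?thesis by (simp add: C_def e_def)
qed

lemma prob_uniform_union_bound:
  fixes \<Omega> S :: "'a set" and \<A> :: "'b set" and E :: "'b \<Rightarrow> 'a set" and \<delta> :: real
  assumes fin: "finite \<Omega>" and ne: "\<Omega> \<noteq> {}" and finA: "finite \<A>"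
    and cover: "\<Omega> - S \<subseteq> (\<Union>A\<in>\<A>. E A)" and sub: "\<And>A. A \<in> \<A> \<Longrightarrow> E A \<subseteq> \<Omega>"
    and small: "\<And>A. A \<in> \<A> \<Longrightarrow> card (E A) \<le> \<delta> * card \<Omega>"
  shows "1 - card \<A> * \<delta> \<le> measure_pmf.prob (pmf_of_set \<Omega>) S"
proof -
  have "card (\<Omega> - S) \<le> card (\<Union>A\<in>\<A>. E A)"
    using cover sub finA fin by (intro card_mono) (auto intro: finite_subset)
  also have "\<dots> \<le> (\<Sum>A\<in>\<A>. card (E A))" using finA by (rule card_UN_le)
  finally have "real (card (\<Omega> - S)) \<le> (\<Sum>A\<in>\<A>. real (card (E A)))"
    by (simp flip: of_nat_sum)
  also have "\<dots> \<le> (\<Sum>A\<in>\<A>. \<delta> * card \<Omega>)" by (intro sum_mono small)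
  finally have bad: "real (card (\<Omega> - S)) \<le> card \<A> * \<delta> * card \<Omega>" by simp
  have "card (\<Omega> \<inter> S) + card (\<Omega> - S) = card \<Omega>"
    using fin by (metis Int_Diff_disjoint Int_Diff_Un card_Un_disjoint finite_Diff finite_Int)
  then have "measure_pmf.prob (pmf_of_set \<Omega>) S = 1 - card (\<Omega> - S) / card \<Omega>"
    using fin ne by (simp add: measure_pmf_of_set field_simps flip: of_nat_add)
  moreover have "card (\<Omega> - S) / card \<Omega> \<le> card \<A> * \<delta>"
    using bad fin ne by (simp add: pos_divide_le_eq card_gt_0_iff)
  ultimately show ?thesis by linarith
qed

lemma most_clauses_meet_every_dense_set:
  fixes L :: "'a set" and k M :: nat
  assumes fin: "finite L" and ne: "L \<noteq> {}" and k: "1600 \<le> k"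
    and long: "1600 * real (card L) \<le> real M * real k * exp (- real k / 1000)"
  shows "1 - (2 / exp 1) ^ card L \<le> measure_pmf.prob (pmf_of_set ({..<M} \<rightarrow>\<^sub>E ({..<k} \<rightarrow>\<^sub>E L)))
           {\<Phi>. \<forall>A \<subseteq> L. 0.009 * real (card L) \<le> card A \<longrightarrow>
              (1 - exp (- real k / 1000)) * M
                \<le> card {i \<in> {..<M}. 0.002 * real k \<le> occurrences k (\<Phi> i) A}}"
    (is "_ \<le> measure_pmf.prob (pmf_of_set ?\<Omega>) ?S")
proof -
  define \<A> where "\<A> = {A. A \<subseteq> L \<and> 0.009 * real (card L) \<le> card A}"
  define E where "E A = {\<Phi> \<in> ?\<Omega>.
      exp (- real k / 1000) * M < card {i \<in> {..<M}. occurrences k (\<Phi> i) A < 0.002 * real k}}" for A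
  have finO: "finite ?\<Omega>" using fin by (simp add: finite_PiE)
  have neO: "?\<Omega> \<noteq> {}" using ne by (simp add: PiE_eq_empty_iff)
  have cardO: "card ?\<Omega> = card L ^ (k * M)" by (simp add: card_PiE power_mult)
  have \<A>_Pow: "\<A> \<subseteq> Pow L" by (auto simp: \<A>_def)
  have finA: "finite \<A>" using fin \<A>_Pow by (meson finite_Pow_iff finite_subset)
  have cover: "?\<Omega> - ?S \<subseteq> (\<Union>A\<in>\<A>. E A)"
  proof
    fix \<Phi> assume "\<Phi> \<in> ?\<Omega> - ?S"
    then obtain A where \<Phi>: "\<Phi> \<in> ?\<Omega>" and A: "A \<in> \<A>" and
      few_hits: "card {i \<in> {..<M}. 0.002 * real k \<le> occurrences k (\<Phi> i) A}
                   < (1 - exp (- real k / 1000)) * M"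
      by (auto simp: \<A>_def not_le)
    let ?G = "{i \<in> {..<M}. 0.002 * real k \<le> occurrences k (\<Phi> i) A}"
    let ?H = "{i \<in> {..<M}. occurrences k (\<Phi> i) A < 0.002 * real k}"
    have "?G \<union> ?H = {..<M}" by auto
    moreover have "card (?G \<union> ?H) = card ?G + card ?H" by (rule card_Un_disjoint) auto
    ultimately have "card ?G + card ?H = M" by simp
    then have "real (card ?G) + real (card ?H) = M" by (simp flip: of_nat_add)
    then have "exp (- real k / 1000) * M < card ?H"
      using few_hits by (simp add: left_diff_distrib)
    then show "\<Phi> \<in> (\<Union>A\<in>\<A>. E A)"
      unfolding E_def using A \<Phi> by blast
  qed
  have small: "card (E A) \<le> exp (- real (card L)) * card ?\<Omega>" if "A \<in> \<A>" for A
  proof -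
    have "A \<subseteq> L" "0.009 * real (card L) \<le> card A" using that by (auto simp: \<A>_def)
    from few_formulas_with_many_avoiding_clauses[OF fin this k long]
    show ?thesis by (simp only: E_def cardO of_nat_power)
  qed
  have "card \<A> * exp (- real (card L)) \<le> 2 ^ card L * exp (- real (card L))"
  proof -
    have "card \<A> \<le> card (Pow L)" using fin \<A>_Pow by (intro card_mono) auto
    then show ?thesis using fin by (simp add: card_Pow flip: of_nat_power)
  qed
  also have "\<dots> = (2 / exp 1) ^ card L"
  proof -
    have "exp (real (card L)) = exp 1 ^ card L" using exp_of_nat_mult[of "card L" 1] by simp
    then show ?thesis by (simp add: exp_minus power_divide divide_inverse power_inverse)
  qed
  finally have "1 - (2 / exp 1) ^ card L \<le> 1 - card \<A> * exp (- real (card L))" by simp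
  also have "\<dots> \<le> measure_pmf.prob (pmf_of_set ?\<Omega>) ?S"
    by (rule prob_uniform_union_bound[OF finO neO finA cover _ small]) (simp add: E_def)
  finally show ?thesis .
qed

lemma card_literals: "card (literals N) = 2 * N"
  by (simp add: literals_def card_cartesian_product)

text \<open>For large k the density 2^k ln 2 - (1 + ln 2)/2 - eps_k exceeds 2^k/2, so the random
  formula is long enough for the main estimate, uniformly in N.\<close>
lemma num_clauses_eventually_large:
  fixes eps :: "nat \<Rightarrow> real"
  assumes eps: "eps \<in> \<Theta>(\<lambda>k. 2 powr (- real k / 3))"
  shows "\<forall>\<^sub>F k in at_top. 1600 \<le> k \<and>
           (\<forall>N. 3200 * real N \<le> real (num_clauses eps k N) * real k * exp (- real k / 1000))"
proof -
  have "(\<lambda>k::nat. 2 powr (- real k / 3)) \<in> o(\<lambda>_. 1)" by real_asymp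
  with bigthetaD1[OF eps] have "eps \<in> o(\<lambda>_. 1)" by (rule landau_o.big_small_trans)
  then have eps_le_1: "\<forall>\<^sub>F k in at_top. norm (eps k) \<le> 1 * norm (1::real)"
    by (rule landau_o.smallD) simp
  have growth: "\<forall>\<^sub>F k in at_top. 3200 \<le> exp (2 * real k / 3) / 2 * real k * exp (- real k / 1000)"
    by real_asymp
  show ?thesis
    using eps_le_1 growth eventually_ge_at_top[of 1600]
  proof eventually_elim
    case (elim k)
    have pow: "exp (2 * real k / 3) \<le> 2 ^ k"
    proof -
      have "2 * real k / 3 \<le> real k * ln 2" using mult_left_mono[OF ln2_ge_two_thirds, of "real k"] by simp
      then have "exp (2 * real k / 3) \<le> exp (real k * ln 2)" by simp
      also have "\<dots> = 2 ^ k" by (simp add: exp_of_nat_mult)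
      finally show ?thesis .
    qed
    have dens: "2 ^ k / 2 \<le> density eps k"
    proof -
      have "(16::real) \<le> 2 ^ k" using power_increasing[of 4 k "2::real"] elim(3) by simp
      moreover have "2/3 * 2 ^ k \<le> ln 2 * (2::real) ^ k"
        by (intro mult_right_mono ln2_ge_two_thirds) simp
      moreover have "eps k \<le> 1" using elim(1) by simp
      moreover have "x / 2 \<le> y - (1 + l) / 2 - e"
        if "16 \<le> x" "2/3 * x \<le> y" "e \<le> 1" "l \<le> 1" for x y l e :: real
        using that by (simp add: field_simps)
      ultimately show ?thesis using ln_2_less_1 unfolding density_def by simp
    qed
    have "exp (2 * real k / 3) / 2 * real k * exp (- real k / 1000)
            \<le> 2 ^ k / 2 * real k * exp (- real k / 1000)"
      using pow by (intro mult_right_mono divide_right_mono) auto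
    with elim(2) have big: "3200 \<le> 2 ^ k / 2 * real k * exp (- real k / 1000)" by linarith
    have "3200 * real N \<le> real (num_clauses eps k N) * real k * exp (- real k / 1000)" for N
    proof -
      have M_ge: "2 ^ k / 2 * real N \<le> real (num_clauses eps k N)"
        using mult_right_mono[OF dens, of "real N"] unfolding num_clauses_def by linarith
      have "3200 * real N \<le> (2 ^ k / 2 * real k * exp (- real k / 1000)) * real N"
        using big by (intro mult_right_mono) auto
      also have "\<dots> = (2 ^ k / 2 * real N) * (real k * exp (- real k / 1000))" by simp
      also have "\<dots> \<le> real (num_clauses eps k N) * (real k * exp (- real k / 1000))"
        using M_ge by (intro mult_right_mono) auto
      finally show ?thesis by (simp add: mult.assoc)
    qed
    with elim(3) show ?case by blast
  qed
qed

text \<open>For fixed k with enough clauses, the probability of the expansion event tends to 1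
  as N \<rightarrow> \<infinity>: for N \<ge> 1 it is at least 1 - (2/e)^(2N) by the main estimate applied to
  the 2N literals.\<close>
lemma expansion_event_tendsto_one:
  fixes eps :: "nat \<Rightarrow> real" and k :: nat
  assumes k: "1600 \<le> k"
    and long: "\<forall>N. 3200 * real N \<le> real (num_clauses eps k N) * real k * exp (- real k / 1000)"
  shows "((\<lambda>N. measure_pmf.prob (random_kcnf k N (num_clauses eps k N))
            {Phi. \<forall>A \<subseteq> literals N. real (card A) \<ge> 0.018 * real N \<longrightarrow>
               real (card {i \<in> {..<num_clauses eps k N}. real (hits k Phi A i) \<ge> 0.002 * real k})
                 \<ge> (1 - exp (- (1/1000) * real k)) * real (num_clauses eps k N)})
         \<longlongrightarrow> 1) at_top"
    (is "(?P \<longlongrightarrow> 1) at_top")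
proof (rule tendsto_sandwich)
  have "1 - (2 / exp 1) ^ card (literals N)
          \<le> measure_pmf.prob (pmf_of_set ({..<num_clauses eps k N} \<rightarrow>\<^sub>E ({..<k} \<rightarrow>\<^sub>E literals N)))
              {\<Phi>. \<forall>A \<subseteq> literals N. 0.009 * real (card (literals N)) \<le> card A \<longrightarrow>
                 (1 - exp (- real k / 1000)) * num_clauses eps k N
                   \<le> card {i \<in> {..<num_clauses eps k N}. 0.002 * real k \<le> occurrences k (\<Phi> i) A}}"
    if "1 \<le> N" for N
    by (rule most_clauses_meet_every_dense_set) (use k long that in \<open>auto simp: literals_def card_literals lessThan_empty_iff\<close>)
  note bound = this
  show "\<forall>\<^sub>F N in at_top. 1 - ((2 / exp 1 :: real) ^ 2) ^ N \<le> ?P N"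
  proof (rule eventually_mono[OF eventually_ge_at_top[of 1]])
    fix N :: nat assume "1 \<le> N"
    from bound[OF this] show "1 - ((2 / exp 1) ^ 2) ^ N \<le> ?P N"
      by (simp add: random_kcnf_def kcnfs_def card_literals hits_def occurrences_def power_mult)
  qed
  show "\<forall>\<^sub>F N in at_top. ?P N \<le> 1" by simp
  have "9/4 \<le> exp (1::real)"
    using exp_ge_one_plus_x_over_n_power_n[of 2 1] by (simp add: power2_eq_square)
  then have "(2 / exp 1 :: real) ^ 2 < 1" by (subst power_less_one_iff) auto
  then have "(\<lambda>N. ((2 / exp 1 :: real) ^ 2) ^ N) \<longlonglongrightarrow> 0"
    by (intro LIMSEQ_power_zero) simp
  from tendsto_diff[OF tendsto_const[of 1] this]
  show "(\<lambda>N. 1 - ((2 / exp 1 :: real) ^ 2) ^ N) \<longlonglongrightarrow> 1" by simp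
  show "(\<lambda>N. 1 :: real) \<longlonglongrightarrow> 1" by simp
qed

theorem mainTheorem10:
  shows "\<exists>c::real > 0. \<forall>eps :: nat \<Rightarrow> real.
     eps \<in> \<Theta>(\<lambda>k. 2 powr (- real k / 3)) \<longrightarrow>
     (\<forall>\<^sub>F k in at_top.
        ((\<lambda>N. measure_pmf.prob (random_kcnf k N (num_clauses eps k N))
            {Phi. \<forall>A \<subseteq> literals N. real (card A) \<ge> 0.018 * real N \<longrightarrow>
               real (card {i \<in> {..<num_clauses eps k N}. real (hits k Phi A i) \<ge> 0.002 * real k})
                 \<ge> (1 - exp (- c * real k)) * real (num_clauses eps k N)})
         \<longlongrightarrow> 1) at_top)"
proof (intro exI[of _ "1/1000"] conjI allI impI)
  fix eps :: "nat \<Rightarrow> real"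
  assume "eps \<in> \<Theta>(\<lambda>k. 2 powr (- real k / 3))"
  from num_clauses_eventually_large[OF this]
  show "\<forall>\<^sub>F k in at_top.
        ((\<lambda>N. measure_pmf.prob (random_kcnf k N (num_clauses eps k N))
            {Phi. \<forall>A \<subseteq> literals N. real (card A) \<ge> 0.018 * real N \<longrightarrow>
               real (card {i \<in> {..<num_clauses eps k N}. real (hits k Phi A i) \<ge> 0.002 * real k})
                 \<ge> (1 - exp (- (1/1000) * real k)) * real (num_clauses eps k N)})
         \<longlongrightarrow> 1) at_top"
    by (rule eventually_mono) (use expansion_event_tendsto_one in blast)
qed simp

end
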